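(* Let $\gamma,\lambda\in\mathbb{C}$ be generic and consider the six equations on cube vertex values $(u_0,u_1,u_2,u_{12},v_0,v_1,v_2,v_{12})$: \[ \mathcal A:\ \frac{u_{12}}{u_0}-\frac{(\gamma u_2-1)(\gamma-u_1)}{(\gamma-u_2)(\gamma u_1-1)}=0,\qquad \mathcal S:\ (1-\gamma u_1)(\lambda+\gamma v_2)-(\gamma-u_1)(\gamma-v_{12})u_0v_2=0, \] \[ \mathcal B:\ (\lambda+\gamma v_2-u_0v_2)(1-\gamma u_0+u_0v_0)+(1-\gamma^2-\lambda)u_0v_0=0, \] \[ \mathcal B':\ (\lambda+\gamma v_{12}-u_1v_{12})(1-\gamma u_1+u_1v_1)+(1-\gamma^2-\lambda)u_1v_1=0, \] \[ \mathcal C:\ (1-\gamma u_0)(\lambda+\gamma v_0)-(\gamma-u_0)(\gamma-v_1)u_1v_0=0,\qquad \mathcal C':\ (1-\gamma u_2)(\lambda+\gamma v_2)-(\gamma-u_2)(\gamma-v_{12})u_{12}v_2=0. \] For generic $u_0,u_1,u_2,v_0$, solve $\mathcal A=0$ for $u_{12}$, $\mathcal B=0$ for $v_2$, $\mathcal C=0$ for $v_1$. Then the three expressions for $v_{12}$ obtained from $\mathcal S=0$, $\mathcal B'=0$, $\mathcal C'=0$ coincide as rational functions of $u_0,u_1,u_2,v_0$, and the tetrahedron equations \[ \mathcal K_1:\ \big(\lambda-\gamma\lambda u_0+(1-\gamma^2)u_0v_0\big)\big(1-\gamma^2+\gamma v_{12}-u_1v_{12}\big)+(1-\gamma^2-\lambda)(\gamma-u_0)(1-\gamma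 u_1)v_0=0, \] \[ \mathcal K_2:\ (\lambda+\gamma v_2-u_0v_2)(1-\gamma u_1+u_1v_1)+(1-\gamma^2-\lambda)u_0v_2=0 \] hold identically.
   Context: The lattice sine-Gordon equation is $\frac{u_{l+1,m+1}}{u_{l,m}}=\frac{(\gamma u_{l,m+1}-1)(\gamma-u_{l+1,m})}{(\gamma-u_{l,m+1})(\gamma u_{l+1,m}-1)}$. In the cube, $u_0=u_{l,m}$, $u_1=u_{l+1,m}$, $u_2=u_{l,m+1}$, $u_{12}=u_{l+1,m+1}$, and $v_0,v_1,v_2,v_{12}$ are correspondingly placed values of an auxiliary function $v$. Generic means all denominators appearing are nonzero. *)

theory Defs
  imports Complex_Main
begin

definition eqA :: "complex \<Rightarrow> complex \<Rightarrow> complex \<Rightarrow> complex \<Rightarrow> complex \<Rightarrow> complex" where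
  "eqA g u0 u1 u2 u12 = u12 / u0 - ((g*u2 - 1)*(g - u1)) / ((g - u2)*(g*u1 - 1))"

definition eqS :: "complex \<Rightarrow> complex \<Rightarrow> complex \<Rightarrow> complex \<Rightarrow> complex \<Rightarrow> complex \<Rightarrow> complex" where
  "eqS g lam u0 u1 v2 v12 = (1 - g*u1)*(lam + g*v2) - (g - u1)*(g - v12)*u0*v2"

definition eqB :: "complex \<Rightarrow> complex \<Rightarrow> complex \<Rightarrow> complex \<Rightarrow> complex \<Rightarrow> complex" where
  "eqB g lam u0 v0 v2 = (lam + g*v2 - u0*v2)*(1 - g*u0 + u0*v0) + (1 - g^2 - lam)*u0*v0"

definition eqB' :: "complex \<Rightarrow> complex \<Rightarrow> complex \<Rightarrow> complex \<Rightarrow> complex \<Rightarrow> complex" where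
  "eqB' g lam u1 v1 v12 = (lam + g*v12 - u1*v12)*(1 - g*u1 + u1*v1) + (1 - g^2 - lam)*u1*v1"

definition eqC :: "complex \<Rightarrow> complex \<Rightarrow> complex \<Rightarrow> complex \<Rightarrow> complex \<Rightarrow> complex \<Rightarrow> complex" where
  "eqC g lam u0 u1 v0 v1 = (1 - g*u0)*(lam + g*v0) - (g - u0)*(g - v1)*u1*v0"

definition eqC' :: "complex \<Rightarrow> complex \<Rightarrow> complex \<Rightarrow> complex \<Rightarrow> complex \<Rightarrow> complex \<Rightarrow> complex" where
  "eqC' g lam u2 u12 v2 v12 = (1 - g*u2)*(lam + g*v2) - (g - u2)*(g - v12)*u12*v2"

definition eqK1 :: "complex \<Rightarrow> complex \<Rightarrow> complex \<Rightarrow> complex \<Rightarrow> complex \<Rightarrow> complex \<Rightarrow> complex" where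
  "eqK1 g lam u0 u1 v0 v12 =
     (lam - g*lam*u0 + (1 - g^2)*u0*v0)*(1 - g^2 + g*v12 - u1*v12)
     + (1 - g^2 - lam)*(g - u0)*(1 - g*u1)*v0"

definition eqK2 :: "complex \<Rightarrow> complex \<Rightarrow> complex \<Rightarrow> complex \<Rightarrow> complex \<Rightarrow> complex \<Rightarrow> complex" where
  "eqK2 g lam u0 u1 v1 v2 = (lam + g*v2 - u0*v2)*(1 - g*u1 + u1*v1) + (1 - g^2 - lam)*u0*v2"

end

theory Submission
  imports Defs
begin

text \<open>The equations S, B' and C' are affine in v12, so each has a unique root once its
  leading coefficient is nonzero, and two of them have the same root iff their coefficient
  vectors are proportional.  With u12, v2 and v1 determined by A, B and C, this
  proportionality, as well as K1 and K2, lies in the ideal generated by the cleared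
  equations A, B, C after multiplying by the (nonzero) denominators of u12, v2 and v1.\<close>

lemma affine_eq_0_iff:
  fixes a b x :: "'a::field"
  assumes "b \<noteq> 0"
  shows "a + b*x = 0 \<longleftrightarrow> x = -a/b"
  using assms by (auto simp: field_simps add_eq_0_iff2)

lemma ex1_affine_root:
  fixes a b :: "'a::field"
  assumes "b \<noteq> 0"
  shows "\<exists>!x. a + b*x = 0"
  using affine_eq_0_iff[OF assms] by auto

lemma affine_same_roots:
  fixes a b c d x :: "'a::field"
  assumes "b \<noteq> 0" "d \<noteq> 0" "a*d = c*b"
  shows "a + b*x = 0 \<longleftrightarrow> c + d*x = 0"
proof -
  have "-a/b = -c/d"
    using assms by (simp add: field_simps)
  then show ?thesis
    using assms by (simp add: affine_eq_0_iff)
qed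

lemma eqS_affine:
  "eqS g lam u0 u1 v2 x = ((1 - g*u1)*(lam + g*v2) - g*(g - u1)*u0*v2) + ((g - u1)*u0*v2)*x"
  unfolding eqS_def by algebra

lemma eqB'_affine:
  "eqB' g lam u1 v1 x = (lam*(1 - g*u1 + u1*v1) + (1 - g^2 - lam)*u1*v1)
     + ((g - u1)*(1 - g*u1 + u1*v1))*x"
  unfolding eqB'_def by algebra

lemma eqC'_affine:
  "eqC' g lam u2 u12 v2 x = ((1 - g*u2)*(lam + g*v2) - g*(g - u2)*u12*v2) + ((g - u2)*u12*v2)*x"
  unfolding eqC'_def by algebra

lemma eqA_cleared:
  assumes "u0 \<noteq> 0" "(g - u2)*(g*u1 - 1) \<noteq> 0" "eqA g u0 u1 u2 u12 = 0"
  shows "u12*((g - u2)*(g*u1 - 1)) = u0*((g*u2 - 1)*(g - u1))"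
proof -
  have "u12/u0 = ((g*u2 - 1)*(g - u1)) / ((g - u2)*(g*u1 - 1))"
    using assms(3) unfolding eqA_def by simp
  then show ?thesis
    using assms(1,2) by (simp add: frac_eq_eq mult.commute)
qed

lemma eqS_iff_eqB':
  assumes B: "eqB g lam u0 v0 v2 = 0" and C: "eqC g lam u0 u1 v0 v1 = 0"
    and den: "(g - u0)*(1 - g*u0 + u0*v0) \<noteq> 0" "(g - u0)*u1*v0 \<noteq> 0"
    and lead: "(g - u1)*u0*v2 \<noteq> 0" "(g - u1)*(1 - g*u1 + u1*v1) \<noteq> 0"
  shows "eqS g lam u0 u1 v2 x = 0 \<longleftrightarrow> eqB' g lam u1 v1 x = 0"
proof -
  let ?aS = "(1 - g*u1)*(lam + g*v2) - g*(g - u1)*u0*v2"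
  let ?aB = "lam*(1 - g*u1 + u1*v1) + (1 - g^2 - lam)*u1*v1"
  have "((g - u0)*(1 - g*u0 + u0*v0))*((g - u0)*u1*v0)
        * (?aS*((g - u1)*(1 - g*u1 + u1*v1)) - ?aB*((g - u1)*u0*v2)) = 0"
    using B C unfolding eqB_def eqC_def by algebra
  then have "?aS*((g - u1)*(1 - g*u1 + u1*v1)) = ?aB*((g - u1)*u0*v2)"
    using den by simp
  then show ?thesis
    unfolding eqS_affine eqB'_affine using affine_same_roots lead by blast
qed

lemma eqS_iff_eqC':
  assumes B: "eqB g lam u0 v0 v2 = 0"
    and A: "u12*((g - u2)*(g*u1 - 1)) = u0*((g*u2 - 1)*(g - u1))"
    and den: "(g - u0)*(1 - g*u0 + u0*v0) \<noteq> 0" "(g - u2)*(g*u1 - 1) \<noteq> 0"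
    and lead: "(g - u1)*u0*v2 \<noteq> 0" "(g - u2)*u12*v2 \<noteq> 0"
  shows "eqS g lam u0 u1 v2 x = 0 \<longleftrightarrow> eqC' g lam u2 u12 v2 x = 0"
proof -
  let ?aS = "(1 - g*u1)*(lam + g*v2) - g*(g - u1)*u0*v2"
  let ?aC = "(1 - g*u2)*(lam + g*v2) - g*(g - u2)*u12*v2"
  have "((g - u0)*(1 - g*u0 + u0*v0))^2*((g - u2)*(g*u1 - 1))
        * (?aS*((g - u2)*u12*v2) - ?aC*((g - u1)*u0*v2)) = 0"
    using B A unfolding eqB_def by algebra
  then have "?aS*((g - u2)*u12*v2) = ?aC*((g - u1)*u0*v2)"
    using den by simp
  then show ?thesis
    unfolding eqS_affine eqC'_affine using affine_same_roots lead by blast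
qed

lemma eqS_imp_eqK1:
  assumes B: "eqB g lam u0 v0 v2 = 0"
    and den: "(g - u0)*(1 - g*u0 + u0*v0) \<noteq> 0"
    and lead: "(g - u1)*u0*v2 \<noteq> 0"
    and S: "eqS g lam u0 u1 v2 x = 0"
  shows "eqK1 g lam u0 u1 v0 x = 0"
proof -
  have "(g - u0)*(1 - g*u0 + u0*v0) * ((g - u1)*u0*v2) * eqK1 g lam u0 u1 v0 x = 0"
    using B S unfolding eqB_def eqS_def eqK1_def by algebra
  then show ?thesis
    using den lead by simp
qed

lemma eqK2_holds:
  assumes B: "eqB g lam u0 v0 v2 = 0" and C: "eqC g lam u0 u1 v0 v1 = 0"
    and den: "(g - u0)*(1 - g*u0 + u0*v0) \<noteq> 0" "(g - u0)*u1*v0 \<noteq> 0"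
  shows "eqK2 g lam u0 u1 v1 v2 = 0"
proof -
  have "(g - u0)*(1 - g*u0 + u0*v0) * ((g - u0)*u1*v0) * eqK2 g lam u0 u1 v1 v2 = 0"
    using B C unfolding eqB_def eqC_def eqK2_def by algebra
  then show ?thesis
    using den by simp
qed

theorem mainTheorem10:
  fixes g lam u0 u1 u2 u12 v0 v1 v2 :: complex
  assumes genA: "u0 \<noteq> 0" "(g - u2)*(g*u1 - 1) \<noteq> 0"
    and genB: "(g - u0)*(1 - g*u0 + u0*v0) \<noteq> 0"
    and genC: "(g - u0)*u1*v0 \<noteq> 0"
    and genS: "(g - u1)*u0*v2 \<noteq> 0"
    and genB': "(g - u1)*(1 - g*u1 + u1*v1) \<noteq> 0"
    and genC': "(g - u2)*u12*v2 \<noteq> 0"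
    and A: "eqA g u0 u1 u2 u12 = 0"
    and B: "eqB g lam u0 v0 v2 = 0"
    and C: "eqC g lam u0 u1 v0 v1 = 0"
  shows "(\<exists>!v12. eqS g lam u0 u1 v2 v12 = 0)
    \<and> (\<exists>!v12. eqB' g lam u1 v1 v12 = 0)
    \<and> (\<exists>!v12. eqC' g lam u2 u12 v2 v12 = 0)
    \<and> (\<forall>v12. eqS g lam u0 u1 v2 v12 = 0 \<longleftrightarrow> eqB' g lam u1 v1 v12 = 0)
    \<and> (\<forall>v12. eqS g lam u0 u1 v2 v12 = 0 \<longleftrightarrow> eqC' g lam u2 u12 v2 v12 = 0)
    \<and> (\<forall>v12. eqS g lam u0 u1 v2 v12 = 0 \<longrightarrow> eqK1 g lam u0 u1 v0 v12 = 0)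
    \<and> eqK2 g lam u0 u1 v1 v2 = 0"
proof -
  have A': "u12*((g - u2)*(g*u1 - 1)) = u0*((g*u2 - 1)*(g - u1))"
    using eqA_cleared[OF genA A] .
  have unique_roots: "(\<exists>!v12. eqS g lam u0 u1 v2 v12 = 0)
      \<and> (\<exists>!v12. eqB' g lam u1 v1 v12 = 0) \<and> (\<exists>!v12. eqC' g lam u2 u12 v2 v12 = 0)"
    unfolding eqS_affine eqB'_affine eqC'_affine
    using ex1_affine_root genS genB' genC' by blast
  show ?thesis
    using unique_roots
      eqS_iff_eqB'[OF B C genB genC genS genB']
      eqS_iff_eqC'[OF B A' genB genA(2) genS genC']
      eqS_imp_eqK1[OF B genB genS] eqK2_holds[OF B C genB genC]
    by blast
qed

end
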